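(* Let $p,q,l,N\in\mathbb{Z}_{\geq 0}$, $s=p+q$, and let $M=(M_1,\dots,M_s)\in\mathrm{Sym}_N^{p}\times\mathrm{Alt}_N^{q}$. Suppose there is a subspace $V\subseteq\mathbb{C}^N$ of dimension $2^sl$ such that $M_1V+\dots+M_sV$ has dimension $s2^sl$. Then the Zariski closure of the orbit $\{(gM_1g^T,\dots,gM_sg^T):g\in\mathrm{GL}_N(\mathbb{C})\}$ contains a tuple $(M'_1,\dots,M'_s)\in\mathrm{Sym}_N^{p}\times\mathrm{Alt}_N^{q}$ such that for each $i$: (a) all entries $(M'_i)_{j,k}$ with $j,k>l$ are zero, and (b) the $N\times l$ matrix formed by the first $l$ columns of $M'_i$ has, in blocks of $l$ rows followed by a final block of $N-(s+1)l$ rows, first block $0_{l\times l}$, $(i+1)$-st block $\mathrm{Id}_l$, and all other blocks zero.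
   Context: $\mathrm{Sym}_N$ and $\mathrm{Alt}_N$ denote the spaces of symmetric, respectively skew-symmetric, complex $N\times N$ matrices; the first $p$ entries of a tuple are symmetric and the last $q$ are skew-symmetric. (Entries of $M'_i$ in the first $l$ rows are then determined by (b) and (skew-)symmetry.) *)

theory Defs
  imports "Jordan_Normal_Form.VS_Connect"
begin

inductive_set polyfun :: "('a \<Rightarrow> 'v \<Rightarrow> complex) \<Rightarrow> 'v set \<Rightarrow> ('a \<Rightarrow> complex) set"
  for coord :: "'a \<Rightarrow> 'v \<Rightarrow> complex" and vars :: "'v set" where
  const: "(\<lambda>_. c) \<in> polyfun coord vars"
| var: "v \<in> vars \<Longrightarrow> (\<lambda>x. coord x v) \<in> polyfun coord vars"
| add: "f \<in> polyfun coord vars \<Longrightarrow> g \<in> polyfun coord vars \<Longrightarrow> (\<lambda>x. f x + g x) \<in> polyfun coord vars"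
| mult: "f \<in> polyfun coord vars \<Longrightarrow> g \<in> polyfun coord vars \<Longrightarrow> (\<lambda>x. f x * g x) \<in> polyfun coord vars"

text \<open>Zariski closure of S inside the affine space X (X = all points whose coordinates
  are given by coord on vars).\<close>
definition zariski_closure ::
  "('a \<Rightarrow> 'v \<Rightarrow> complex) \<Rightarrow> 'v set \<Rightarrow> 'a set \<Rightarrow> 'a set \<Rightarrow> 'a set" where
  "zariski_closure coord vars X S =
     {x \<in> X. \<forall>f \<in> polyfun coord vars. (\<forall>y \<in> S. f y = 0) \<longrightarrow> f x = 0}"

definition tuple_space :: "nat \<Rightarrow> nat \<Rightarrow> complex mat list set" where
  "tuple_space s N = {Ms. length Ms = s \<and> (\<forall>i<s. Ms ! i \<in> carrier_mat N N)}"

definition tuple_coord :: "complex mat list \<Rightarrow> nat \<times> nat \<times> nat \<Rightarrow> complex" where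
  "tuple_coord Ms v = (case v of (i, j, k) \<Rightarrow> Ms ! i $$ (j, k))"

definition tuple_vars :: "nat \<Rightarrow> nat \<Rightarrow> (nat \<times> nat \<times> nat) set" where
  "tuple_vars s N = {0..<s} \<times> {0..<N} \<times> {0..<N}"

definition sym_alt_tuples :: "nat \<Rightarrow> nat \<Rightarrow> nat \<Rightarrow> complex mat list set" where
  "sym_alt_tuples p q N = {Ms \<in> tuple_space (p + q) N.
      (\<forall>i<p. transpose_mat (Ms ! i) = Ms ! i) \<and>
      (\<forall>i. p \<le> i \<and> i < p + q \<longrightarrow> transpose_mat (Ms ! i) = - (Ms ! i))}"

definition congr_orbit :: "nat \<Rightarrow> complex mat list \<Rightarrow> complex mat list set" where
  "congr_orbit N Ms = {map (\<lambda>A. g * A * transpose_mat g) Ms | g.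
      g \<in> carrier_mat N N \<and> invertible_mat g}"

definition csubspace :: "nat \<Rightarrow> complex vec set \<Rightarrow> bool" where
  "csubspace N W = VectorSpace.subspace class_ring W (module_vec TYPE(complex) N)"

definition cdim :: "nat \<Rightarrow> complex vec set \<Rightarrow> nat" where
  "cdim N W = vectorspace.dim class_ring ((module_vec TYPE(complex) N)\<lparr>carrier := W\<rparr>)"

definition cspan :: "nat \<Rightarrow> complex vec set \<Rightarrow> complex vec set" where
  "cspan N S = LinearCombinations.module.span class_ring (module_vec TYPE(complex) N) S"

definition image_sum :: "nat \<Rightarrow> complex mat list \<Rightarrow> complex vec set \<Rightarrow> complex vec set" where
  "image_sum N Ms V = cspan N (\<Union>i<length Ms. (\<lambda>v. (Ms ! i) *\<^sub>v v) ` V)"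

end

theory Submission
  imports Defs "Jordan_Normal_Form.DL_Rank" "Jordan_Normal_Form.Spectral_Radius"
begin

text \<open>
  (1) A symmetric or skew-symmetric form on \<open>\<complex>\<^sup>n\<close> has a totally isotropic subspace of dimension
      \<open>\<lfloor>n/2\<rfloor>\<close> (induction, using that every form on \<open>\<complex>\<^sup>2\<close> has an isotropic vector).  Iterating,
      \<open>s\<close> such forms on \<open>\<complex>\<^bsup>2\<^sup>s l\<^esup>\<close> have a common totally isotropic subspace of dimension \<open>l\<close>.
  (2) Applied to the forms \<open>M\<^sub>i\<close> restricted to \<open>V\<close>, this yields an \<open>N \<times> l\<close> matrix \<open>W\<close> of rank \<open>l\<close>
      with \<open>W\<^sup>T M\<^sub>i W = 0\<close>.  The dimension hypothesis says that \<open>[M\<^sub>1 B | \<dots> | M\<^sub>s B]\<close> has full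
      column rank for a basis \<open>B\<close> of \<open>V\<close>; hence so does \<open>[M\<^sub>1 W | \<dots> | M\<^sub>s W]\<close>, which therefore has
      a left inverse \<open>X\<close>.
  (3) The square matrix \<open>A\<close> with rows \<open>W\<^sup>T\<close>, then \<open>X\<close>, then zeros satisfies: column \<open>k < l\<close> of
      \<open>A M\<^sub>i A\<^sup>T\<close> is the unit vector \<open>e\<^bsub>(i+1) l + k\<^esub>\<close>.
  (4) The curve \<open>g\<^sub>t = diag(t\<^sup>-\<^sup>1 I\<^sub>l, t I) (A + t\<^sup>3 I)\<close> lies in \<open>GL\<^sub>N\<close> for small \<open>t \<noteq> 0\<close>, and
      \<open>g\<^sub>t M\<^sub>i g\<^sub>t\<^sup>T\<close> tends to \<open>A M\<^sub>i A\<^sup>T\<close> with its two diagonal blocks cleared.  Since polynomial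
      functions are continuous, this limit lies in the Zariski closure of the orbit.
\<close>

section \<open>Congruence of bilinear forms\<close>

lemma congr_entry:
  fixes P F :: "'a::comm_ring_1 mat"
  assumes P: "P \<in> carrier_mat n m" and F: "F \<in> carrier_mat n n" and a: "a < m" and b: "b < m"
  shows "(transpose_mat P * F * P) $$ (a, b) = col P a \<bullet> (F *\<^sub>v col P b)"
proof -
  have "transpose_mat P * F * P = transpose_mat P * (F * P)"
    using P F by (intro assoc_mult_mat) auto
  also have "\<dots> $$ (a, b) = row (transpose_mat P) a \<bullet> col (F * P) b"
    using P F a b by (intro index_mult_mat) auto
  also have "row (transpose_mat P) a = col P a" using P a by simp
  also have "col (F * P) b = F *\<^sub>v col P b" using P F b by (intro col_mult2) auto
  finally show ?thesis .
qed

lemma congr_entry_rows: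
  fixes A F :: "'a::comm_ring_1 mat"
  assumes A: "A \<in> carrier_mat m n" and F: "F \<in> carrier_mat n n" and j: "j < m" and k: "k < m"
  shows "(A * F * transpose_mat A) $$ (j, k) = row A j \<bullet> (F *\<^sub>v row A k)"
  using congr_entry[of "transpose_mat A" n m F j k] A F j k by simp

lemma transpose_congr:
  fixes E F :: "'a::comm_ring_1 mat"
  assumes F: "F \<in> carrier_mat n n" and E: "E \<in> carrier_mat n k"
  shows "transpose_mat (transpose_mat E * F * E) = transpose_mat E * transpose_mat F * E"
proof -
  have "transpose_mat (transpose_mat E * F * E) = transpose_mat E * transpose_mat (transpose_mat E * F)"
    using F E by (intro transpose_mult[of _ k n]) auto
  also have "transpose_mat (transpose_mat E * F) = transpose_mat F * E"
    using F E by (subst transpose_mult[of _ k n _ n]) auto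
  also have "transpose_mat E * (transpose_mat F * E) = transpose_mat E * transpose_mat F * E"
    using F E by (intro assoc_mult_mat[symmetric, of _ k n _ n _ k]) auto
  finally show ?thesis .
qed

lemma congr_mult:
  fixes P1 P2 G :: "'a::comm_ring_1 mat"
  assumes P1: "P1 \<in> carrier_mat n h" and P2: "P2 \<in> carrier_mat h l" and G: "G \<in> carrier_mat n n"
  shows "transpose_mat (P1 * P2) * G * (P1 * P2) = transpose_mat P2 * (transpose_mat P1 * G * P1) * P2"
proof -
  have "transpose_mat (P1 * P2) * G * (P1 * P2) = transpose_mat P2 * transpose_mat P1 * G * (P1 * P2)"
    using transpose_mult[OF P1 P2] by simp
  also have "\<dots> = transpose_mat P2 * (transpose_mat P1 * G) * (P1 * P2)"
    using P1 P2 G by (subst assoc_mult_mat[of _ l h _ n _ n]) auto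
  also have "\<dots> = transpose_mat P2 * (transpose_mat P1 * G) * P1 * P2"
    using P1 P2 G by (subst assoc_mult_mat[of _ l n _ h _ l, symmetric]) auto
  also have "\<dots> = transpose_mat P2 * (transpose_mat P1 * G * P1) * P2"
    using P1 P2 G by (subst assoc_mult_mat[of _ l h _ n _ h]) auto
  finally show ?thesis .
qed

definition symskew :: "'a::comm_ring_1 mat \<Rightarrow> bool" where
  "symskew F \<longleftrightarrow> transpose_mat F = F \<or> transpose_mat F = - F"

lemma symskew_congr:
  fixes F E :: "'a::comm_ring_1 mat"
  assumes F: "F \<in> carrier_mat n n" and E: "E \<in> carrier_mat n k" and s: "symskew F"
  shows "symskew (transpose_mat E * F * E)"
proof (cases "transpose_mat F = F")
  case True
  then show ?thesis using transpose_congr[OF F E] unfolding symskew_def by simp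
next
  case False
  then have "transpose_mat F = - F" using s unfolding symskew_def by auto
  then have "transpose_mat (transpose_mat E * F * E) = - (transpose_mat E * F * E)"
    using transpose_congr[OF F E] F E by (simp add: uminus_mult_right_mat uminus_mult_left_mat)
  then show ?thesis unfolding symskew_def by simp
qed

lemma sym_alt_tuples_symskew:
  assumes "Ms \<in> sym_alt_tuples p q N"
  shows "\<forall>i<length Ms. Ms ! i \<in> carrier_mat N N \<and> symskew (Ms ! i)"
proof (intro allI impI)
  fix i assume "i < length Ms"
  then show "Ms ! i \<in> carrier_mat N N \<and> symskew (Ms ! i)"
    using assms unfolding sym_alt_tuples_def tuple_space_def symskew_def by (cases "i < p") auto
qed

lemma bilinear_transpose:
  fixes F :: "'a::comm_ring_1 mat"
  assumes F: "F \<in> carrier_mat n n" and x: "x \<in> carrier_vec n" and y: "y \<in> carrier_vec n"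
  shows "y \<bullet> (F *\<^sub>v x) = x \<bullet> (transpose_mat F *\<^sub>v y)"
proof -
  have "y \<bullet> (F *\<^sub>v x) = (transpose_mat F *\<^sub>v y) \<bullet> x"
    using transpose_vec_mult_scalar[OF F x y] by simp
  also have "\<dots> = x \<bullet> (transpose_mat F *\<^sub>v y)"
    using F x y by (intro comm_scalar_prod) auto
  finally show ?thesis .
qed

lemma bilinear_uminus:
  fixes F :: "'a::comm_ring_1 mat"
  assumes F: "F \<in> carrier_mat n n" and x: "x \<in> carrier_vec n" and y: "y \<in> carrier_vec n"
  shows "x \<bullet> ((- F) *\<^sub>v y) = - (x \<bullet> (F *\<^sub>v y))"
proof -
  have "(- F) *\<^sub>v y = - (F *\<^sub>v y)"
    using F y by (intro eq_vecI) (auto simp: mult_mat_vec_def scalar_prod_def sum_negf)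
  then show ?thesis using F x y by (simp add: scalar_prod_uminus_right)
qed

lemma symskew_orth_swap:
  fixes F :: "'a::comm_ring_1 mat"
  assumes F: "F \<in> carrier_mat n n" and x: "x \<in> carrier_vec n" and y: "y \<in> carrier_vec n"
    and s: "symskew F" and orth: "x \<bullet> (F *\<^sub>v y) = 0"
  shows "y \<bullet> (F *\<^sub>v x) = 0"
  using bilinear_transpose[OF F x y] bilinear_uminus[OF F x y] s orth
  unfolding symskew_def by auto

definition inj_mat :: "'a::semiring_0 mat \<Rightarrow> bool" where
  "inj_mat C \<longleftrightarrow> (\<forall>v \<in> carrier_vec (dim_col C). C *\<^sub>v v = 0\<^sub>v (dim_row C) \<longrightarrow> v = 0\<^sub>v (dim_col C))"

lemma inj_matI:
  assumes "C \<in> carrier_mat n k" "\<And>v. v \<in> carrier_vec k \<Longrightarrow> C *\<^sub>v v = 0\<^sub>v n \<Longrightarrow> v = 0\<^sub>v k"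
  shows "inj_mat C"
  using assms unfolding inj_mat_def by auto

lemma inj_matD:
  assumes "inj_mat C" "C \<in> carrier_mat n k" "v \<in> carrier_vec k" "C *\<^sub>v v = 0\<^sub>v n"
  shows "v = 0\<^sub>v k"
  using assms unfolding inj_mat_def by auto

lemma inj_mat_mult:
  fixes A B :: "'a::semiring_0 mat"
  assumes A: "A \<in> carrier_mat n m" "inj_mat A" and B: "B \<in> carrier_mat m k" "inj_mat B"
  shows "inj_mat (A * B)"
proof (rule inj_matI)
  show "A * B \<in> carrier_mat n k" using A B by simp
  fix v assume v: "v \<in> carrier_vec k" and ABv: "A * B *\<^sub>v v = 0\<^sub>v n"
  have "A *\<^sub>v (B *\<^sub>v v) = 0\<^sub>v n" using ABv assoc_mult_mat_vec[OF A(1) B(1) v] by simp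
  then have "B *\<^sub>v v = 0\<^sub>v m" using inj_matD[OF A(2) A(1)] B(1) v by simp
  then show "v = 0\<^sub>v k" using inj_matD[OF B(2) B(1) v] by simp
qed
section \<open>Isotropic subspaces of symmetric and skew-symmetric forms\<close>

lemma sum_single_support:
  fixes f :: "nat \<Rightarrow> 'a::comm_monoid_add"
  assumes "a < n" "\<And>i. i < n \<Longrightarrow> i \<noteq> a \<Longrightarrow> f i = 0"
  shows "sum f {0..<n} = f a"
proof -
  have "sum f {0..<n} = sum f {a}"
    using assms by (intro sum.mono_neutral_right) auto
  then show ?thesis by simp
qed

lemma sum_two_support:
  fixes f :: "nat \<Rightarrow> 'a::comm_monoid_add"
  assumes "a < n" "b < n" "a \<noteq> b" "\<And>i. i < n \<Longrightarrow> i \<noteq> a \<Longrightarrow> i \<noteq> b \<Longrightarrow> f i = 0"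
  shows "sum f {0..<n} = f a + f b"
proof -
  have "sum f {0..<n} = sum f {a, b}"
    using assms by (intro sum.mono_neutral_right) auto
  then show ?thesis using assms by simp
qed

lemma complex_quadratic_root:
  fixes a b c :: complex
  assumes "a \<noteq> 0"
  shows "\<exists>t. a * t^2 + b * t + c = 0"
proof -
  define s where "s = csqrt (b^2 - 4*a*c)"
  have s2: "s^2 = b^2 - 4*a*c" unfolding s_def by simp
  define t where "t = (- b + s) / (2*a)"
  have "a * t^2 + b * t + c = (s^2 - (b^2 - 4*a*c)) / (4*a)"
    unfolding t_def using assms by (simp add: field_simps power2_eq_square)
  then show ?thesis using s2 by auto
qed

text \<open>Every bilinear form on \<open>\<complex>\<^sup>n\<close>, \<open>n \<ge> 2\<close>, has a nonzero isotropic vector, found in the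
  plane of the first two coordinates by solving a quadratic equation.\<close>
lemma isotropic_vector:
  fixes F :: "complex mat"
  assumes F: "F \<in> carrier_mat n n" and n: "2 \<le> n"
  shows "\<exists>x r. x \<in> carrier_vec n \<and> r < n \<and> x $ r \<noteq> 0 \<and> x \<bullet> (F *\<^sub>v x) = 0"
proof -
  obtain t0 t1 where t: "(t0, t1) \<noteq> (0, 0)"
    and root: "F $$ (0,0) * t0^2 + (F $$ (0,1) + F $$ (1,0)) * t0 * t1 + F $$ (1,1) * t1^2 = 0"
  proof (cases "F $$ (0,0) = 0")
    case True
    show ?thesis by (rule that[of 1 0]) (use True in simp_all)
  next
    case False
    obtain t where "F $$ (0,0) * t^2 + (F $$ (0,1) + F $$ (1,0)) * t + F $$ (1,1) = 0"
      using complex_quadratic_root[OF False] by blast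
    then show ?thesis by (intro that[of t 1]) simp_all
  qed
  define x :: "complex vec" where "x = vec n (\<lambda>i. if i = 0 then t0 else if i = 1 then t1 else 0)"
  have x: "x \<in> carrier_vec n" unfolding x_def by simp
  have Fx: "(F *\<^sub>v x) $ i = F $$ (i,0) * t0 + F $$ (i,1) * t1" if "i < n" for i
  proof -
    have "(F *\<^sub>v x) $ i = (\<Sum>j = 0..<n. F $$ (i,j) * x $ j)"
      using F that by (simp add: mult_mat_vec_def scalar_prod_def x_def)
    also have "\<dots> = F $$ (i,0) * x $ 0 + F $$ (i,1) * x $ 1"
      using n by (intro sum_two_support) (auto simp: x_def)
    finally show ?thesis using n by (simp add: x_def)
  qed
  have "x \<bullet> (F *\<^sub>v x) = (\<Sum>i = 0..<n. x $ i * (F *\<^sub>v x) $ i)"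
    using F by (simp add: scalar_prod_def x_def)
  also have "\<dots> = x $ 0 * (F *\<^sub>v x) $ 0 + x $ 1 * (F *\<^sub>v x) $ 1"
    using n by (intro sum_two_support) (auto simp: x_def)
  also have "\<dots> = 0"
    using Fx[of 0] Fx[of 1] n root by (simp add: x_def algebra_simps power2_eq_square)
  finally have iso: "x \<bullet> (F *\<^sub>v x) = 0" .
  show ?thesis
  proof (cases "t0 = 0")
    case True
    then show ?thesis using t n x iso by (intro exI[of _ x] exI[of _ 1]) (auto simp: x_def)
  next
    case False
    then show ?thesis using n x iso by (intro exI[of _ x] exI[of _ 0]) (auto simp: x_def)
  qed
qed

text \<open>Given a vector \<open>u\<close> of length \<open>n\<close> and a coordinate \<open>r\<close>, the subspace \<open>{z. u \<bullet> z = 0 \<and> z $ r = 0}\<close> has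
  dimension at least \<open>n - 2\<close>: we parametrise \<open>n - 2\<close> dimensions of it injectively by a matrix \<open>E\<close>.
  Its columns are the unit vectors outside \<open>{r, q}\<close>, corrected in coordinate \<open>q\<close>.\<close>
lemma annihilator_frame:
  fixes u :: "'a::field vec"
  assumes u: "u \<in> carrier_vec n" and r: "r < n" and n2: "2 \<le> n"
  shows "\<exists>E \<in> carrier_mat n (n-2). inj_mat E \<and>
           (\<forall>w \<in> carrier_vec (n-2). (E *\<^sub>v w) $ r = 0 \<and> u \<bullet> (E *\<^sub>v w) = 0)"
proof -
  obtain q where q: "q < n" "q \<noteq> r" and uq: "u $ q = 0 \<Longrightarrow> (\<forall>k<n. k \<noteq> r \<longrightarrow> u $ k = 0)"
  proof (cases "\<exists>k<n. k \<noteq> r \<and> u $ k \<noteq> 0")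
    case True
    then show ?thesis using that by blast
  next
    case False
    show ?thesis by (rule that[of "if r = 0 then 1 else 0"]) (use False n2 in auto)
  qed
  obtain ks where ks: "set ks = {0..<n} - {r, q}" "distinct ks"
    using finite_distinct_list[of "{0..<n} - {r, q}"] by blast
  have len: "length ks = n - 2"
    using distinct_card[OF ks(2)] q r ks(1) by (simp add: card_Diff_subset)
  have ks_set: "ks ! j < n \<and> ks ! j \<noteq> r \<and> ks ! j \<noteq> q" if "j < n - 2" for j
    using nth_mem[of j ks] that len ks(1) by auto
  have ks_inj: "j = j'" if "j < n - 2" "j' < n - 2" "ks ! j = ks ! j'" for j j'
    using that ks(2) len nth_eq_iff_index_eq by metis
  define E where "E = mat n (n-2) (\<lambda>(i,j). if i = ks ! j then 1
      else if i = q then - (u $ (ks ! j)) / u $ q else 0)"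
  have E: "E \<in> carrier_mat n (n-2)" unfolding E_def by simp
  have "(E *\<^sub>v w) $ r = 0" if w: "w \<in> carrier_vec (n-2)" for w
  proof -
    have "E $$ (r, j) = 0" if "j < n - 2" for j using ks_set[OF that] q r that by (auto simp: E_def)
    then show ?thesis using E w r by (auto simp: mult_mat_vec_def scalar_prod_def intro!: sum.neutral)
  qed
  moreover have "u \<bullet> (E *\<^sub>v w) = 0" if w: "w \<in> carrier_vec (n-2)" for w
  proof -
    have "transpose_mat E *\<^sub>v u = 0\<^sub>v (n-2)"
    proof (rule eq_vecI)
      fix j assume "j < dim_vec (0\<^sub>v (n-2) :: 'a vec)"
      then have j: "j < n - 2" by simp
      have "(transpose_mat E *\<^sub>v u) $ j = (\<Sum>i = 0..<n. E $$ (i,j) * u $ i)"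
        using E u j by (simp add: mult_mat_vec_def scalar_prod_def)
      also have "\<dots> = E $$ (ks!j,j) * u $ (ks!j) + E $$ (q,j) * u $ q"
        using ks_set[OF j] q j by (intro sum_two_support) (auto simp: E_def)
      also have "\<dots> = 0"
        using uq ks_set[OF j] q j by (cases "u $ q = 0") (auto simp: E_def)
      finally show "(transpose_mat E *\<^sub>v u) $ j = 0\<^sub>v (n-2) $ j" using j by simp
    qed (use E in simp)
    then show ?thesis using transpose_vec_mult_scalar[OF E w u] w by simp
  qed
  moreover have "inj_mat E"
  proof (rule inj_matI[OF E])
    fix w assume w: "w \<in> carrier_vec (n-2)" and Ew: "E *\<^sub>v w = 0\<^sub>v n"
    show "w = 0\<^sub>v (n-2)"
    proof (rule eq_vecI)
      fix j assume "j < dim_vec (0\<^sub>v (n-2) :: 'a vec)"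
      then have j: "j < n - 2" by simp
      have "(E *\<^sub>v w) $ (ks!j) = (\<Sum>j' = 0..<n-2. E $$ (ks!j,j') * w $ j')"
        using E w ks_set[OF j] by (simp add: mult_mat_vec_def scalar_prod_def)
      also have "\<dots> = E $$ (ks!j,j) * w $ j"
        using j ks_set[OF j] ks_inj[OF j] by (intro sum_single_support) (auto simp: E_def)
      also have "\<dots> = w $ j" using j ks_set[OF j] by (simp add: E_def)
      finally show "w $ j = 0\<^sub>v (n-2) $ j" using Ew ks_set[OF j] j by simp
    qed (use w in simp)
  qed
  ultimately show ?thesis using E by blast
qed

definition prepend_col :: "'a vec \<Rightarrow> 'a mat \<Rightarrow> 'a mat" where
  "prepend_col x Q = mat (dim_vec x) (Suc (dim_col Q)) (\<lambda>(i, a). if a = 0 then x $ i else Q $$ (i, a - 1))"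

lemma prepend_col_carrier:
  "x \<in> carrier_vec n \<Longrightarrow> Q \<in> carrier_mat n m \<Longrightarrow> prepend_col x Q \<in> carrier_mat n (Suc m)"
  unfolding prepend_col_def by simp

lemma col_prepend_col:
  assumes x: "x \<in> carrier_vec n" and Q: "Q \<in> carrier_mat n m"
  shows "col (prepend_col x Q) 0 = x" and "a < m \<Longrightarrow> col (prepend_col x Q) (Suc a) = col Q a"
  using x Q by (auto simp: prepend_col_def intro!: eq_vecI)

lemma prepend_col_mult_vec:
  fixes x :: "'a::comm_semiring_0 vec"
  assumes x: "x \<in> carrier_vec n" and Q: "Q \<in> carrier_mat n m" and v: "v \<in> carrier_vec (Suc m)"
  shows "prepend_col x Q *\<^sub>v v = v $ 0 \<cdot>\<^sub>v x + Q *\<^sub>v vec m (\<lambda>a. v $ Suc a)"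
proof (rule eq_vecI)
  fix i assume "i < dim_vec (v $ 0 \<cdot>\<^sub>v x + Q *\<^sub>v vec m (\<lambda>a. v $ Suc a))"
  then have i: "i < n" using x Q by simp
  have "(prepend_col x Q *\<^sub>v v) $ i = (\<Sum>a = 0..<Suc m. prepend_col x Q $$ (i,a) * v $ a)"
    using prepend_col_carrier[OF x Q] v i by (simp add: mult_mat_vec_def scalar_prod_def)
  also have "\<dots> = x $ i * v $ 0 + (\<Sum>a = 0..<m. Q $$ (i, a) * v $ Suc a)"
    using x Q i by (subst sum.atLeast0_lessThan_Suc_shift) (auto simp: prepend_col_def intro!: sum.cong)
  finally show "(prepend_col x Q *\<^sub>v v) $ i = (v $ 0 \<cdot>\<^sub>v x + Q *\<^sub>v vec m (\<lambda>a. v $ Suc a)) $ i"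
    using x Q i by (simp add: mult_mat_vec_def scalar_prod_def mult.commute)
qed (use x Q prepend_col_carrier[OF x Q] in simp)

lemma inj_prepend_col:
  fixes x :: "'a::field vec"
  assumes x: "x \<in> carrier_vec n" and Q: "Q \<in> carrier_mat n m" "inj_mat Q"
    and r: "r < n" "x $ r \<noteq> 0" and Qr: "\<And>w. w \<in> carrier_vec m \<Longrightarrow> (Q *\<^sub>v w) $ r = 0"
  shows "inj_mat (prepend_col x Q)"
proof (rule inj_matI[OF prepend_col_carrier[OF x Q(1)]])
  fix v assume v: "v \<in> carrier_vec (Suc m)" and Pv: "prepend_col x Q *\<^sub>v v = 0\<^sub>v n"
  define v' where "v' = vec m (\<lambda>a. v $ Suc a)"
  have v': "v' \<in> carrier_vec m" unfolding v'_def by simp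
  have sum0: "v $ 0 \<cdot>\<^sub>v x + Q *\<^sub>v v' = 0\<^sub>v n"
    using Pv prepend_col_mult_vec[OF x Q(1) v] unfolding v'_def by simp
  have "v $ 0 * x $ r = 0"
    using arg_cong[OF sum0, of "\<lambda>z. z $ r"] Qr[OF v'] r x Q(1) v' by simp
  then have v0: "v $ 0 = 0" using r by simp
  have "Q *\<^sub>v v' = 0\<^sub>v n"
  proof (rule eq_vecI)
    fix i assume "i < dim_vec (0\<^sub>v n :: 'a vec)"
    then show "(Q *\<^sub>v v') $ i = 0\<^sub>v n $ i"
      using arg_cong[OF sum0, of "\<lambda>z. z $ i"] v0 x Q(1) v' by simp
  qed (use Q(1) in simp)
  then have v'0: "v' = 0\<^sub>v m" using inj_matD[OF Q(2) Q(1) v'] by simp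
  show "v = 0\<^sub>v (Suc m)"
  proof (rule eq_vecI)
    fix a assume "a < dim_vec (0\<^sub>v (Suc m) :: 'a vec)"
    then have a: "a < Suc m" by simp
    show "v $ a = 0\<^sub>v (Suc m) $ a"
    proof (cases a)
      case (Suc a')
      then have "v' $ a' = 0" using v'0 a by simp
      then show ?thesis using Suc a unfolding v'_def by simp
    qed (use v0 in simp)
  qed (use v in simp)
qed

lemma isotropic_prepend_col:
  fixes F :: "'a::comm_ring_1 mat"
  assumes F: "F \<in> carrier_mat n n" "symskew F" and x: "x \<in> carrier_vec n" and Q: "Q \<in> carrier_mat n m"
    and xx: "x \<bullet> (F *\<^sub>v x) = 0" and xQ: "\<And>b. b < m \<Longrightarrow> x \<bullet> (F *\<^sub>v col Q b) = 0"
    and QQ: "transpose_mat Q * F * Q = 0\<^sub>m m m"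
  shows "transpose_mat (prepend_col x Q) * F * prepend_col x Q = 0\<^sub>m (Suc m) (Suc m)"
proof (rule eq_matI)
  define P where "P = prepend_col x Q"
  have P: "P \<in> carrier_mat n (Suc m)" unfolding P_def using prepend_col_carrier[OF x Q] .
  have colQ: "col Q b \<in> carrier_vec n" for b using Q by (metis carrier_matD(1) col_dim)
  fix a b assume "a < dim_row (0\<^sub>m (Suc m) (Suc m) :: 'a mat)" "b < dim_col (0\<^sub>m (Suc m) (Suc m) :: 'a mat)"
  then have a: "a < Suc m" and b: "b < Suc m" by auto
  have "col P a \<bullet> (F *\<^sub>v col P b) = 0"
  proof (cases a; cases b)
    fix a' b' assume "a = Suc a'" "b = Suc b'"
    then show ?thesis
      using congr_entry[OF Q(1) F(1), of a' b'] QQ a b col_prepend_col[OF x Q] by (simp add: P_def)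
  next
    fix b' assume "a = 0" "b = Suc b'"
    then show ?thesis using xQ[of b'] b col_prepend_col[OF x Q] by (simp add: P_def)
  next
    fix a' assume "a = Suc a'" "b = 0"
    then show ?thesis using symskew_orth_swap[OF F(1) x colQ F(2) xQ[of a']] a col_prepend_col[OF x Q]
      by (simp add: P_def)
  qed (use xx col_prepend_col[OF x Q] in \<open>simp add: P_def\<close>)
  then show "(transpose_mat (prepend_col x Q) * F * prepend_col x Q) $$ (a, b) = 0\<^sub>m (Suc m) (Suc m) $$ (a, b)"
    using congr_entry[OF P F(1) a b] a b unfolding P_def by simp
qed (use prepend_col_carrier[OF x Q] F in auto)

text \<open>Induction on \<open>m\<close>: take an
  isotropic vector \<open>x\<close> and continue inside an \<open>(n-2)\<close>-dimensional subspace of \<open>x\<^sup>\<bottom>\<close> avoiding \<open>x\<close>.\<close>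
lemma isotropic_subspace:
  fixes F :: "complex mat"
  assumes "F \<in> carrier_mat n n" "symskew F" "2 * m \<le> n"
  shows "\<exists>P \<in> carrier_mat n m. inj_mat P \<and> transpose_mat P * F * P = 0\<^sub>m m m"
  using assms
proof (induction m arbitrary: n F)
  case 0
  have "inj_mat (0\<^sub>m n 0 :: complex mat)" by (rule inj_matI[of _ n 0]) auto
  then show ?case using "0.prems"(1) by (intro bexI[of _ "0\<^sub>m n 0"]) (auto intro!: eq_matI)
next
  case (Suc m)
  note F = Suc.prems(1,2)
  have n2: "2 \<le> n" using Suc.prems(3) by simp
  obtain x r where x: "x \<in> carrier_vec n" and r: "r < n" "x $ r \<noteq> 0" and xx: "x \<bullet> (F *\<^sub>v x) = 0"
    using isotropic_vector[OF F(1) n2] by blast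
  define u where "u = transpose_mat F *\<^sub>v x"
  have u: "u \<in> carrier_vec n" using F x unfolding u_def by simp
  obtain E where E: "E \<in> carrier_mat n (n-2)" "inj_mat E"
    and Er: "\<And>w. w \<in> carrier_vec (n-2) \<Longrightarrow> (E *\<^sub>v w) $ r = 0"
    and Eu: "\<And>w. w \<in> carrier_vec (n-2) \<Longrightarrow> u \<bullet> (E *\<^sub>v w) = 0"
    using annihilator_frame[OF u r(1) n2] by blast
  have F': "transpose_mat E * F * E \<in> carrier_mat (n-2) (n-2)" "symskew (transpose_mat E * F * E)"
    using E F symskew_congr[OF F(1) E(1) F(2)] by auto
  have "2 * m \<le> n - 2" using Suc.prems(3) by simp
  then obtain P' where P': "P' \<in> carrier_mat (n-2) m" "inj_mat P'"
    and P'iso: "transpose_mat P' * (transpose_mat E * F * E) * P' = 0\<^sub>m m m"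
    using Suc.IH[OF F'] by blast
  define Q where "Q = E * P'"
  have Q: "Q \<in> carrier_mat n m" "inj_mat Q" unfolding Q_def using inj_mat_mult[OF E P'] E P' by auto
  have Qr: "(Q *\<^sub>v w) $ r = 0" if "w \<in> carrier_vec m" for w
    using Er[of "P' *\<^sub>v w"] that E P' unfolding Q_def by (simp add: assoc_mult_mat_vec)
  have xQ: "x \<bullet> (F *\<^sub>v col Q b) = 0" if b: "b < m" for b
  proof -
    have colQ: "col Q b = E *\<^sub>v col P' b" unfolding Q_def using E P' b by (intro col_mult2) auto
    have "col P' b \<in> carrier_vec (n-2)" using P' by (metis carrier_matD(1) col_dim)
    then show ?thesis
      using colQ bilinear_transpose[OF F(1) _ x, of "E *\<^sub>v col P' b"] Eu E u x
      by (simp add: comm_scalar_prod[of _ n] u_def)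
  qed
  have QQ: "transpose_mat Q * F * Q = 0\<^sub>m m m"
    unfolding Q_def congr_mult[OF E(1) P'(1) F(1)] using P'iso .
  show ?case
    using prepend_col_carrier[OF x Q(1)] inj_prepend_col[OF x Q r Qr]
      isotropic_prepend_col[OF F x Q(1) xx xQ QQ] by blast
qed

text \<open>Forms \<open>F\<^sub>1, \<dots>, F\<^sub>s\<close> on \<open>\<complex>\<^sup>n\<close>, \<open>n = 2\<^sup>s l\<close>, have a common totally isotropic subspace of
  dimension \<open>l\<close>: halve the dimension once for each form.\<close>
lemma common_isotropic_subspace:
  fixes Fs :: "complex mat list"
  assumes "\<forall>F \<in> set Fs. F \<in> carrier_mat n n \<and> symskew F" "n = 2 ^ length Fs * l"
  shows "\<exists>P \<in> carrier_mat n l. inj_mat P \<and> (\<forall>F \<in> set Fs. transpose_mat P * F * P = 0\<^sub>m l l)"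
  using assms
proof (induction "length Fs" arbitrary: Fs n)
  case 0
  have "inj_mat (1\<^sub>m l :: complex mat)" by (rule inj_matI[of _ l l]) auto
  then show ?case using "0" by (intro bexI[of _ "1\<^sub>m l"]) auto
next
  case (Suc k FFs)
  then obtain F Fs where FFs: "FFs = F # Fs" and k: "k = length Fs" by (cases FFs) auto
  define h where "h = 2 ^ length Fs * l"
  have F: "F \<in> carrier_mat n n" "symskew F" and n: "2 * h \<le> n"
    using Suc.prems unfolding FFs h_def by auto
  obtain P1 where P1: "P1 \<in> carrier_mat n h" "inj_mat P1" and P1iso: "transpose_mat P1 * F * P1 = 0\<^sub>m h h"
    using isotropic_subspace[OF F n] by blast
  define Gs where "Gs = map (\<lambda>G. transpose_mat P1 * G * P1) Fs"
  have "\<forall>G \<in> set Gs. G \<in> carrier_mat h h \<and> symskew G"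
    unfolding Gs_def using Suc.prems(1) P1 symskew_congr[of _ n P1 h] FFs by auto
  moreover have "k = length Gs" "h = 2 ^ length Gs * l" unfolding Gs_def h_def k by simp_all
  ultimately obtain P2 where P2: "P2 \<in> carrier_mat h l" "inj_mat P2"
    and P2iso: "\<forall>G \<in> set Gs. transpose_mat P2 * G * P2 = 0\<^sub>m l l"
    using Suc.hyps(1) by blast
  have "transpose_mat (P1 * P2) * G * (P1 * P2) = 0\<^sub>m l l" if G: "G \<in> set FFs" for G
  proof -
    have Gc: "G \<in> carrier_mat n n" using G Suc.prems(1) by auto
    show ?thesis
      using G P1iso P2 P2iso unfolding congr_mult[OF P1(1) P2(1) Gc] Gs_def FFs by auto
  qed
  then show ?case using inj_mat_mult[OF P1 P2] P1 P2 by (intro bexI[of _ "P1 * P2"]) auto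
qed
section \<open>The block matrix \<open>[M\<^sub>1 B | \<dots> | M\<^sub>s B]\<close>\<close>

lemma subspace_basis:
  fixes V :: "complex vec set"
  assumes V: "csubspace N V"
  shows "\<exists>bs. set bs \<subseteq> V \<and> V \<subseteq> cspan N (set bs) \<and> length bs = cdim N V"
proof -
  interpret VS: vec_space "TYPE(complex)" N .
  have sub: "VectorSpace.subspace class_ring V VS.V" using V unfolding csubspace_def by simp
  interpret W: vectorspace class_ring "VS.vs V" using VS.subspace_is_vs[OF sub] .
  have VN: "V \<subseteq> carrier_vec N" using sub unfolding VectorSpace.subspace_def submodule_def by auto
  have smod: "submodule class_ring V VS.V" using sub unfolding VectorSpace.subspace_def by simp
  have bound: "finite A \<and> card A \<le> N" if "A \<subseteq> carrier (VS.vs V) \<and> W.lin_indpt A" for A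
  proof -
    have AV: "A \<subseteq> V" using that by simp
    have "VS.lin_indpt A" using that VS.span_li_not_depend(2)[OF AV smod] by simp
    moreover have "A \<subseteq> carrier_vec N" using AV VN by auto
    ultimately show ?thesis using VS.li_le_dim[of A] VS.fin_dim VS.dim_is_n by simp
  qed
  have "{} \<subseteq> carrier (VS.vs V) \<and> W.lin_indpt {}"
    unfolding W.lin_dep_def by auto
  from maximal_exists[of "\<lambda>A. A \<subseteq> carrier (VS.vs V) \<and> W.lin_indpt A", OF bound this]
  obtain A where A: "finite A" "maximal A (\<lambda>A. A \<subseteq> carrier (VS.vs V) \<and> W.lin_indpt A)" by blast
  have bA: "W.basis A" using W.max_li_is_basis[OF A(2)] .
  have AV: "A \<subseteq> V" using bA unfolding W.basis_def by simp
  have "W.span A = V" using bA unfolding W.basis_def by simp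
  then have spanA: "VS.span A = V" using VS.span_li_not_depend(1)[OF AV smod] by simp
  obtain bs where bs: "set bs = A" "distinct bs" using finite_distinct_list[OF A(1)] by blast
  have "length bs = card A" using bs distinct_card by fastforce
  moreover have "cdim N V = card A" unfolding cdim_def using W.dim_basis[OF A(1) bA] by simp
  ultimately show ?thesis using bs AV spanA unfolding cspan_def by (intro exI[of _ bs]) auto
qed

lemma (in vec_space) rank_full_distinct:
  assumes A: "A \<in> carrier_mat n nc" and r: "rank A = nc"
  shows "distinct (cols A)"
proof (rule ccontr)
  assume nd: "\<not> distinct (cols A)"
  obtain S where S: "maximal S (\<lambda>T. T \<subseteq> set (cols A) \<and> lin_indpt T)"
    using maximal_exists[of "(\<lambda>T. T \<subseteq> set (cols A) \<and> lin_indpt T)" "card (set (cols A))" "{}"]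
    by (meson List.finite_set card_mono empty_iff empty_subsetI finite_lin_indpt2 rev_finite_subset)
  then have "card S \<le> card (set (cols A))" by (simp add: card_mono maximal_def)
  moreover have "card (set (cols A)) < length (cols A)"
    using nd card_distinct nat_less_le card_length by metis
  ultimately have "card S < nc" using A by simp
  then show False using rank_card_indpt[OF A S] r by simp
qed

lemma (in vec_space) full_rank_inj:
  assumes C: "C \<in> carrier_mat n k" and r: "rank C = k"
  shows "inj_mat C \<and> k \<le> n"
proof
  have dist: "distinct (cols C)" using rank_full_distinct[OF C r] .
  have li: "lin_indpt (set (cols C))" using full_rank_lin_indpt[OF C r dist] .
  show "inj_mat C" using lin_depI[OF C _ _ _ dist] li by (intro inj_matI[OF C]) blast
  have colsC: "set (cols C) \<subseteq> carrier_vec n" using C by (auto simp: cols_def)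
  have "card (set (cols C)) \<le> n" using li_le_dim(2)[OF fin_dim colsC li] dim_is_n by simp
  then show "k \<le> n" using distinct_card[OF dist] C by simp
qed

lemma det_nonzero_inverse:
  fixes A :: "complex mat"
  assumes A: "A \<in> carrier_mat n n" and d: "det A \<noteq> 0"
  shows "\<exists>B \<in> carrier_mat n n. A * B = 1\<^sub>m n \<and> B * A = 1\<^sub>m n"
proof -
  have "A \<in> Units (ring_mat TYPE(complex) n ())" using det_non_zero_imp_unit[OF A d] .
  then show ?thesis unfolding Units_def by (auto simp: ring_mat_simps)
qed

text \<open>An injective complex matrix \<open>C\<close> has a left inverse: its Gram matrix \<open>C\<^sup>* C\<close> is invertible,
  because \<open>v\<^sup>* C\<^sup>* C v = |C v|\<^sup>2\<close>.\<close>
lemma left_inverse: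
  fixes C :: "complex mat"
  assumes C: "C \<in> carrier_mat n k" and inj: "inj_mat C"
  shows "\<exists>X \<in> carrier_mat k n. X * C = 1\<^sub>m k"
proof -
  define Ch where "Ch = mat k n (\<lambda>(a,j). cnj (C $$ (j,a)))"
  have Ch: "Ch \<in> carrier_mat k n" unfolding Ch_def by simp
  define H where "H = Ch * C"
  have H: "H \<in> carrier_mat k k" unfolding H_def using Ch C by simp
  have "det H \<noteq> 0"
  proof
    assume "det H = 0"
    then obtain v where v: "v \<in> carrier_vec k" "v \<noteq> 0\<^sub>v k" "H *\<^sub>v v = 0\<^sub>v k"
      using det_0_iff_vec_prod_zero[OF H] by blast
    define w where "w = C *\<^sub>v v"
    have w: "w \<in> carrier_vec n" unfolding w_def using C v by simp
    have Hv: "H *\<^sub>v v = Ch *\<^sub>v w" unfolding H_def w_def using Ch C v by (simp add: assoc_mult_mat_vec)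
    have "0 = (\<Sum>a<k. cnj (v $ a) * (Ch *\<^sub>v w) $ a)" using v(3) Hv by simp
    also have "\<dots> = (\<Sum>a<k. \<Sum>j<n. cnj (v $ a) * cnj (C $$ (j,a)) * w $ j)"
      using Ch w by (simp add: mult_mat_vec_def scalar_prod_def Ch_def sum_distrib_left atLeast0LessThan mult.assoc)
    also have "\<dots> = (\<Sum>j<n. w $ j * cnj (\<Sum>a<k. C $$ (j,a) * v $ a))"
      by (subst sum.swap) (simp add: cnj_sum sum_distrib_left mult.commute mult.left_commute)
    also have "\<dots> = (\<Sum>j<n. w $ j * cnj (w $ j))"
      using C v by (intro sum.cong refl) (simp add: w_def mult_mat_vec_def scalar_prod_def atLeast0LessThan)
    also have "\<dots> = w \<bullet>c w"
      using w by (simp add: scalar_prod_def atLeast0LessThan)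
    finally have "w = 0\<^sub>v n" using w by simp
    then show False using inj_matD[OF inj C v(1)] v(2) unfolding w_def by simp
  qed
  then obtain Hi where Hi: "Hi \<in> carrier_mat k k" "Hi * H = 1\<^sub>m k" using det_nonzero_inverse[OF H] by blast
  have "(Hi * Ch) * C = Hi * (Ch * C)" using Hi Ch C by (simp add: assoc_mult_mat)
  then have "(Hi * Ch) * C = 1\<^sub>m k" using Hi unfolding H_def by simp
  then show ?thesis using Hi Ch by (intro bexI[of _ "Hi * Ch"]) auto
qed

definition slice_vec :: "'a vec \<Rightarrow> nat \<Rightarrow> nat \<Rightarrow> 'a vec" where
  "slice_vec v d i = vec d (\<lambda>k. v $ (i * d + k))"

definition stack_vecs :: "nat \<Rightarrow> nat \<Rightarrow> (nat \<Rightarrow> 'a vec) \<Rightarrow> 'a vec" where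
  "stack_vecs s d f = vec (s * d) (\<lambda>c. f (c div d) $ (c mod d))"

lemma block_index_bound: "i < s \<Longrightarrow> k < d \<Longrightarrow> i * d + k < s * (d::nat)"
  by (metis add.commute add_mult_distrib less_le_trans mult_le_mono1 nat_add_left_cancel_less Suc_leI mult_Suc)

lemma slice_stack_vecs:
  assumes "i < s" "f i \<in> carrier_vec d"
  shows "slice_vec (stack_vecs s d f) d i = f i"
  using assms block_index_bound[OF assms(1)] by (intro eq_vecI) (auto simp: slice_vec_def stack_vecs_def)

lemma slice_zero_vec: "i < s \<Longrightarrow> slice_vec (0\<^sub>v (s * d)) d i = 0\<^sub>v d"
  using block_index_bound[of i s _ d] by (intro eq_vecI) (auto simp: slice_vec_def)

lemma zero_if_slices_zero:
  assumes v: "v \<in> carrier_vec (s * d)" and sl: "\<And>i. i < s \<Longrightarrow> slice_vec v d i = 0\<^sub>v d"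
  shows "v = 0\<^sub>v (s * d)"
proof (rule eq_vecI)
  fix c assume "c < dim_vec (0\<^sub>v (s * d) :: 'a vec)"
  then have c: "c < s * d" by simp
  then have d: "0 < d" by (cases d) auto
  have "c div d < s" using c by (simp add: less_mult_imp_div_less)
  then have "slice_vec v d (c div d) $ (c mod d) = 0" using sl d by simp
  then show "v $ c = 0\<^sub>v (s * d) $ c" using c d by (simp add: slice_vec_def mult.commute)
qed (use v in simp)

lemma sum_blocks:
  fixes f :: "nat \<Rightarrow> 'a::comm_monoid_add"
  shows "(\<Sum>c<s*m. f c) = (\<Sum>i<s. \<Sum>k<m. f (i*m+k))"
proof -
  have "(\<Sum>c<s*m. f c) = (\<Sum>i<s. sum f {i*m..<i*m+m})" by (simp add: sum.nat_group)
  also have "\<dots> = (\<Sum>i<s. \<Sum>k<m. f (i*m+k))"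
  proof (rule sum.cong[OF refl])
    fix i assume "i \<in> {..<s}"
    have "sum f {0 + i*m..<m + i*m} = (\<Sum>k = 0..<m. f (k + i*m))"
      by (rule sum.shift_bounds_nat_ivl)
    then show "sum f {i*m..<i*m+m} = (\<Sum>k<m. f (i*m+k))"
      by (simp add: add.commute atLeast0LessThan)
  qed
  finally show ?thesis .
qed

definition block_row :: "'a::semiring_0 mat list \<Rightarrow> 'a mat \<Rightarrow> 'a mat" where
  "block_row Ms B = mat (dim_row B) (length Ms * dim_col B)
     (\<lambda>(r, c). (Ms ! (c div dim_col B) * B) $$ (r, c mod dim_col B))"

lemma block_row_carrier:
  "B \<in> carrier_mat N d \<Longrightarrow> block_row Ms B \<in> carrier_mat N (length Ms * d)"
  unfolding block_row_def by simp

lemma col_block_row: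
  assumes Ms: "\<forall>i<length Ms. Ms ! i \<in> carrier_mat N N" and B: "B \<in> carrier_mat N d"
    and i: "i < length Ms" and k: "k < d"
  shows "col (block_row Ms B) (i * d + k) = Ms ! i *\<^sub>v col B k"
proof -
  have "col (block_row Ms B) (i * d + k) = col (Ms ! i * B) k"
    using Ms B i k block_index_bound[OF i k] by (intro eq_vecI) (auto simp: block_row_def)
  also have "\<dots> = Ms ! i *\<^sub>v col B k" using Ms B i k by (intro col_mult2) auto
  finally show ?thesis .
qed

lemma block_row_mult_vec:
  assumes Ms: "\<forall>i<length Ms. Ms ! i \<in> carrier_mat N N" and B: "B \<in> carrier_mat N d"
    and v: "v \<in> carrier_vec (length Ms * d)"
  shows "block_row Ms B *\<^sub>v v = vec N (\<lambda>r. \<Sum>i<length Ms. (Ms ! i *\<^sub>v (B *\<^sub>v slice_vec v d i)) $ r)"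
proof (rule eq_vecI)
  fix r assume "r < dim_vec (vec N (\<lambda>r. \<Sum>i<length Ms. (Ms ! i *\<^sub>v (B *\<^sub>v slice_vec v d i)) $ r))"
  then have r: "r < N" by simp
  have "(block_row Ms B *\<^sub>v v) $ r = (\<Sum>c<length Ms * d. (Ms ! (c div d) * B) $$ (r, c mod d) * v $ c)"
    using r v B by (simp add: block_row_def mult_mat_vec_def scalar_prod_def atLeast0LessThan)
  also have "\<dots> = (\<Sum>i<length Ms. \<Sum>k<d. (Ms ! ((i*d+k) div d) * B) $$ (r, (i*d+k) mod d) * v $ (i*d+k))"
    by (rule sum_blocks)
  also have "\<dots> = (\<Sum>i<length Ms. \<Sum>k<d. (Ms ! i * B) $$ (r, k) * v $ (i*d+k))"
    by (intro sum.cong refl) auto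
  also have "\<dots> = (\<Sum>i<length Ms. (Ms ! i *\<^sub>v (B *\<^sub>v slice_vec v d i)) $ r)"
  proof (rule sum.cong[OF refl])
    fix i assume "i \<in> {..<length Ms}"
    then have Mi: "Ms ! i \<in> carrier_mat N N" using Ms by simp
    have "Ms ! i *\<^sub>v (B *\<^sub>v slice_vec v d i) = (Ms ! i * B) *\<^sub>v slice_vec v d i"
      using assoc_mult_mat_vec[OF Mi B, of "slice_vec v d i"] by (simp add: slice_vec_def)
    then show "(\<Sum>k<d. (Ms ! i * B) $$ (r, k) * v $ (i*d+k)) = (Ms ! i *\<^sub>v (B *\<^sub>v slice_vec v d i)) $ r"
      using Mi B r by (simp add: mult_mat_vec_def scalar_prod_def atLeast0LessThan slice_vec_def)
  qed
  finally show "(block_row Ms B *\<^sub>v v) $ r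
      = vec N (\<lambda>r. \<Sum>i<length Ms. (Ms ! i *\<^sub>v (B *\<^sub>v slice_vec v d i)) $ r) $ r" using r by simp
qed (use block_row_carrier[OF B, of Ms] in auto)

text \<open>Right multiplication of \<open>B\<close> by an injective \<open>P\<close> keeps the block row injective, since
  \<open>[M\<^sub>i B P] v = [M\<^sub>i B] (P v\<^sub>1, \<dots>, P v\<^sub>s)\<close>.\<close>
lemma inj_block_row_mult:
  assumes Ms: "\<forall>i<length Ms. Ms ! i \<in> carrier_mat N N"
    and B: "B \<in> carrier_mat N d" "inj_mat (block_row Ms B)"
    and P: "P \<in> carrier_mat d l" "inj_mat P"
  shows "inj_mat (block_row Ms (B * P))"
proof (rule inj_matI)
  define s where "s = length Ms"
  have BP: "B * P \<in> carrier_mat N l" using B P by simp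
  show "block_row Ms (B * P) \<in> carrier_mat N (length Ms * l)" using block_row_carrier[OF BP] .
  fix v assume v: "v \<in> carrier_vec (length Ms * l)" and Cv: "block_row Ms (B * P) *\<^sub>v v = 0\<^sub>v N"
  define u where "u = stack_vecs s d (\<lambda>i. P *\<^sub>v slice_vec v l i)"
  have u: "u \<in> carrier_vec (length Ms * d)" unfolding u_def s_def stack_vecs_def by simp
  have slice_u: "slice_vec u d i = P *\<^sub>v slice_vec v l i" if "i < s" for i
    unfolding u_def using P that by (intro slice_stack_vecs) (auto simp: slice_vec_def)
  have "block_row Ms B *\<^sub>v u = vec N (\<lambda>r. \<Sum>i<s. (Ms ! i *\<^sub>v (B *\<^sub>v slice_vec u d i)) $ r)"
    using block_row_mult_vec[OF Ms B(1) u] unfolding s_def .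
  also have "\<dots> = vec N (\<lambda>r. \<Sum>i<s. (Ms ! i *\<^sub>v ((B * P) *\<^sub>v slice_vec v l i)) $ r)"
    using slice_u assoc_mult_mat_vec[OF B(1) P(1)]
    by (intro arg_cong[where f = "vec N"] ext sum.cong refl) (simp add: slice_vec_def)
  also have "\<dots> = 0\<^sub>v N" using block_row_mult_vec[OF Ms BP v] Cv unfolding s_def by simp
  finally have u0: "u = 0\<^sub>v (length Ms * d)" using inj_matD[OF B(2) block_row_carrier[OF B(1)] u] by simp
  have "P *\<^sub>v slice_vec v l i = 0\<^sub>v d" if "i < s" for i
  proof -
    have "P *\<^sub>v slice_vec v l i = slice_vec u d i" using slice_u[OF that] by simp
    also have "\<dots> = 0\<^sub>v d" using u0 slice_zero_vec[OF that[unfolded s_def], of d] by simp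
    finally show ?thesis .
  qed
  then have "slice_vec v l i = 0\<^sub>v l" if "i < length Ms" for i
    using inj_matD[OF P(2) P(1)] that unfolding s_def by (simp add: slice_vec_def)
  then show "v = 0\<^sub>v (length Ms * l)" using zero_if_slices_zero[OF v] by blast
qed

lemma span_block_row:
  fixes Ms :: "complex mat list" and bs :: "complex vec list"
  assumes Ms: "\<forall>i<length Ms. Ms ! i \<in> carrier_mat N N"
    and bsV: "set bs \<subseteq> V" and Vsp: "V \<subseteq> cspan N (set bs)" and bsN: "set bs \<subseteq> carrier_vec N"
  shows "cspan N (set (cols (block_row Ms (mat_of_cols N bs)))) = image_sum N Ms V"
proof -
  interpret VS: vec_space "TYPE(complex)" N .
  define d where "d = length bs"
  define B where "B = mat_of_cols N bs"
  define C where "C = block_row Ms B"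
  define U where "U = (\<Union>i<length Ms. (\<lambda>v. Ms ! i *\<^sub>v v) ` V)"
  have B: "B \<in> carrier_mat N d" unfolding B_def d_def by simp
  have C: "C \<in> carrier_mat N (length Ms * d)" unfolding C_def using block_row_carrier[OF B] .
  have colB: "col B k = bs ! k" if "k < d" for k
    using that bsN nth_mem[of k bs] unfolding B_def d_def by (intro col_mat_of_cols) auto
  have VN: "V \<subseteq> carrier_vec N" using Vsp VS.span_closed bsN unfolding cspan_def by blast
  have UN: "U \<subseteq> carrier_vec N" unfolding U_def using VN Ms by fastforce
  have colsC: "set (cols C) \<subseteq> carrier_vec N" using C by (auto simp: cols_def)
  have cols_in_U: "set (cols C) \<subseteq> U"
  proof
    fix y assume "y \<in> set (cols C)"
    then obtain c where c: "c < length Ms * d" and y: "y = col C c" using C by (auto simp: cols_def)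
    then have d0: "0 < d" by (cases d) auto
    have i: "c div d < length Ms" using c by (simp add: less_mult_imp_div_less)
    have "y = Ms ! (c div d) *\<^sub>v bs ! (c mod d)"
      using y col_block_row[OF Ms B i, of "c mod d"] colB[of "c mod d"] d0
      unfolding C_def by (simp add: mult.commute)
    moreover have "bs ! (c mod d) \<in> V" using bsV d0 unfolding d_def by auto
    ultimately show "y \<in> U" unfolding U_def using i by auto
  qed
  have U_in_span: "U \<subseteq> VS.span (set (cols C))"
  proof
    fix y assume "y \<in> U"
    then obtain i v where i: "i < length Ms" and v: "v \<in> V" and y: "y = Ms ! i *\<^sub>v v"
      unfolding U_def by auto
    have Mi: "Ms ! i \<in> carrier_mat N N" using Ms i by auto
    have "v \<in> VS.col_space B"
      using v Vsp bsN unfolding cspan_def B_def VS.col_space_def by (auto simp: cols_mat_of_cols)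
    then obtain x where x: "x \<in> carrier_vec d" and Bx: "B *\<^sub>v x = v"
      using VS.col_space_eq[OF B] B by auto
    have MB: "Ms ! i * B \<in> carrier_mat N d" using Mi B by simp
    have yMB: "y = (Ms ! i * B) *\<^sub>v x" using y Bx assoc_mult_mat_vec[OF Mi B x] by simp
    then have "y \<in> carrier_vec N" using MB x by simp
    then have "y \<in> VS.col_space (Ms ! i * B)"
      unfolding VS.col_space_eq[OF MB] using x yMB Mi B by auto
    then have y_span: "y \<in> VS.span (set (cols (Ms ! i * B)))" unfolding VS.col_space_def .
    have "set (cols (Ms ! i * B)) \<subseteq> set (cols C)"
    proof
      fix z assume "z \<in> set (cols (Ms ! i * B))"
      then obtain k where k: "k < d" and z: "z = col (Ms ! i * B) k" using MB by (auto simp: cols_def)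
      have "z = col C (i * d + k)"
        using z col_block_row[OF Ms B i k] col_mult2[OF Mi B k] unfolding C_def by simp
      then show "z \<in> set (cols C)" using block_index_bound[OF i k] C by (auto simp: cols_def)
    qed
    then show "y \<in> VS.span (set (cols C))" using y_span VS.span_is_monotone by blast
  qed
  have "VS.span (set (cols C)) = image_sum N Ms V"
    unfolding image_sum_def cspan_def U_def[symmetric]
    using VS.span_is_monotone[OF cols_in_U] VS.span_subsetI[OF colsC U_in_span] by blast
  then show ?thesis unfolding cspan_def C_def B_def .
qed

lemma inj_block_row_basis:
  fixes Ms :: "complex mat list" and bs :: "complex vec list"
  assumes Ms: "\<forall>i<length Ms. Ms ! i \<in> carrier_mat N N"
    and bsV: "set bs \<subseteq> V" and Vsp: "V \<subseteq> cspan N (set bs)" and bsN: "set bs \<subseteq> carrier_vec N"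
    and dimV: "cdim N (image_sum N Ms V) = length Ms * length bs"
  shows "inj_mat (block_row Ms (mat_of_cols N bs)) \<and> length Ms * length bs \<le> N"
proof -
  interpret VS: vec_space "TYPE(complex)" N .
  have C: "block_row Ms (mat_of_cols N bs) \<in> carrier_mat N (length Ms * length bs)"
    using block_row_carrier[of "mat_of_cols N bs" N "length bs"] by simp
  have "VS.rank (block_row Ms (mat_of_cols N bs)) = length Ms * length bs"
    using span_block_row[OF Ms bsV Vsp bsN] dimV unfolding VS.rank_def cdim_def cspan_def by simp
  then show ?thesis using VS.full_rank_inj[OF C] by simp
qed

section \<open>A normal form for the first \<open>l\<close> columns\<close>

lemma isotropic_frame:
  fixes Ms :: "complex mat list"
  assumes Ms: "\<forall>i<length Ms. Ms ! i \<in> carrier_mat N N \<and> symskew (Ms ! i)"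
    and V: "csubspace N V" "cdim N V = 2 ^ length Ms * l"
    and MV: "cdim N (image_sum N Ms V) = length Ms * (2 ^ length Ms * l)"
  shows "\<exists>W \<in> carrier_mat N l. inj_mat (block_row Ms W) \<and> length Ms * l \<le> N \<and>
           (\<forall>i<length Ms. transpose_mat W * Ms ! i * W = 0\<^sub>m l l)"
proof -
  define d where "d = 2 ^ length Ms * l"
  have Mc: "\<forall>i<length Ms. Ms ! i \<in> carrier_mat N N" using Ms by simp
  obtain bs where bsV: "set bs \<subseteq> V" and Vsp: "V \<subseteq> cspan N (set bs)" and lbs: "length bs = d"
    using subspace_basis[OF V(1)] V(2) unfolding d_def by auto
  have bsN: "set bs \<subseteq> carrier_vec N"
    using bsV V(1) unfolding csubspace_def VectorSpace.subspace_def submodule_def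
    by (auto simp: module_vec_simps)
  define B where "B = mat_of_cols N bs"
  have B: "B \<in> carrier_mat N d" unfolding B_def using lbs mat_of_cols_carrier(1)[of N bs] by simp
  have injB: "inj_mat (block_row Ms B)" and sdN: "length Ms * d \<le> N"
    using inj_block_row_basis[OF Mc bsV Vsp bsN] MV lbs unfolding B_def d_def by auto
  define Fs where "Fs = map (\<lambda>F. transpose_mat B * F * B) Ms"
  have "\<forall>F \<in> set Fs. F \<in> carrier_mat d d \<and> symskew F"
  proof
    fix F assume "F \<in> set Fs"
    then obtain i where i: "i < length Ms" and F: "F = transpose_mat B * Ms ! i * B"
      unfolding Fs_def by (auto simp: in_set_conv_nth)
    have "Ms ! i \<in> carrier_mat N N" "symskew (Ms ! i)" using Ms i by auto
    then show "F \<in> carrier_mat d d \<and> symskew F" unfolding F using B symskew_congr[OF _ B] by simp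
  qed
  moreover have "d = 2 ^ length Fs * l" unfolding Fs_def d_def by simp
  ultimately obtain P where P: "P \<in> carrier_mat d l" "inj_mat P"
    and isoP: "\<forall>F \<in> set Fs. transpose_mat P * F * P = 0\<^sub>m l l"
    using common_isotropic_subspace by blast
  have "transpose_mat (B * P) * Ms ! i * (B * P) = 0\<^sub>m l l" if i: "i < length Ms" for i
  proof -
    have "transpose_mat B * Ms ! i * B \<in> set Fs" unfolding Fs_def using nth_mem[OF i] by simp
    then show ?thesis using isoP congr_mult[OF B P(1), of "Ms ! i"] Mc i by simp
  qed
  moreover have "length Ms * l \<le> N"
  proof -
    have "l \<le> d" unfolding d_def by simp
    then show ?thesis using sdN mult_le_mono2 order_trans by blast
  qed
  ultimately show ?thesis
    using inj_block_row_mult[OF Mc B injB P] B P by (intro bexI[of _ "B * P"]) auto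
qed

text \<open>The top block vanishes by isotropy of \<open>W\<close>, the middle one is \<open>X [M\<^sub>1 W | \<dots> | M\<^sub>s W] = Id\<close>.\<close>
lemma frame_completion:
  fixes Ms :: "complex mat list"
  assumes Ms: "\<forall>i<length Ms. Ms ! i \<in> carrier_mat N N"
    and W: "W \<in> carrier_mat N l" "inj_mat (block_row Ms W)" and sN: "length Ms * l \<le> N"
    and iso: "\<forall>i<length Ms. transpose_mat W * Ms ! i * W = 0\<^sub>m l l"
  shows "\<exists>A \<in> carrier_mat N N. \<forall>i<length Ms. \<forall>j<N. \<forall>k<l.
           (A * Ms ! i * transpose_mat A) $$ (j, k) = (if j = (i + 1) * l + k then 1 else 0)"
proof -
  define s where "s = length Ms"
  define C where "C = block_row Ms W"
  have C: "C \<in> carrier_mat N (s * l)" unfolding C_def s_def using block_row_carrier[OF W(1)] .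
  obtain X where X: "X \<in> carrier_mat (s * l) N" and XC: "X * C = 1\<^sub>m (s * l)"
    using left_inverse[OF C] W(2) unfolding C_def by blast
  define A where "A = mat N N (\<lambda>(j, c). if j < l then W $$ (c, j)
      else if j - l < s * l then X $$ (j - l, c) else 0)"
  have A: "A \<in> carrier_mat N N" unfolding A_def by simp
  have rowA_top: "row A j = col W j" if "j < N" "j < l" for j
    using that W unfolding A_def by (intro eq_vecI) auto
  have rowA_mid: "row A j = row X (j - l)" if "j < N" "l \<le> j" "j - l < s * l" for j
    using that X unfolding A_def by (intro eq_vecI) auto
  have rowA_bot: "row A j = 0\<^sub>v N" if "j < N" "l \<le> j" "\<not> j - l < s * l" for j
    using that unfolding A_def by (intro eq_vecI) auto
  have "(A * Ms ! i * transpose_mat A) $$ (j, k) = (if j = (i + 1) * l + k then 1 else 0)"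
    if i: "i < s" and j: "j < N" and k: "k < l" for i j k
  proof -
    have Mi: "Ms ! i \<in> carrier_mat N N" using Ms i unfolding s_def by simp
    have ik: "i * l + k < s * l" using block_index_bound[OF i k] .
    then have kN: "k < N" using sN unfolding s_def by linarith
    have "col W k \<in> carrier_vec N" using W(1) by (metis carrier_matD(1) col_dim)
    then have MWk: "Ms ! i *\<^sub>v col W k \<in> carrier_vec N" using mult_mat_vec_carrier[OF Mi] by blast
    have entry: "(A * Ms ! i * transpose_mat A) $$ (j, k) = row A j \<bullet> (Ms ! i *\<^sub>v col W k)"
      unfolding rowA_top[OF kN k, symmetric] by (rule congr_entry_rows[OF A Mi j kN])
    consider (top) "j < l" | (mid) "l \<le> j" "j - l < s * l" | (bot) "l \<le> j" "\<not> j - l < s * l"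
      by linarith
    then show ?thesis
    proof cases
      case top
      have "row A j \<bullet> (Ms ! i *\<^sub>v col W k) = (transpose_mat W * Ms ! i * W) $$ (j, k)"
        using congr_entry[OF W(1) Mi top k] rowA_top[OF j top] by simp
      moreover have "(transpose_mat W * Ms ! i * W) $$ (j, k) = 0" using iso i top k unfolding s_def by simp
      moreover have "j \<noteq> (i + 1) * l + k" using top by simp
      ultimately show ?thesis using entry by simp
    next
      case mid
      have "row A j \<bullet> (Ms ! i *\<^sub>v col W k) = row X (j - l) \<bullet> col C (i * l + k)"
        using rowA_mid[OF j mid] col_block_row[OF Ms W(1) i[unfolded s_def] k] unfolding C_def by simp
      also have "\<dots> = (X * C) $$ (j - l, i * l + k)" using X C mid ik by simp
      also have "\<dots> = (if j - l = i * l + k then 1 else 0)" using XC mid ik by simp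
      finally have "row A j \<bullet> (Ms ! i *\<^sub>v col W k) = (if j - l = i * l + k then 1 else 0)" .
      moreover have "(j - l = i * l + k) = (j = (i + 1) * l + k)" using mid(1) by auto
      ultimately show ?thesis using entry by simp
    next
      case bot
      then have "j \<noteq> (i + 1) * l + k" using ik by auto
      then show ?thesis using entry rowA_bot[OF j bot] MWk by simp
    qed
  qed
  then show ?thesis using A unfolding s_def by blast
qed

section \<open>Degeneration inside the orbit closure\<close>

text \<open>Polynomial functions are continuous, so limits of points of \<open>S\<close> lie in the Zariski closure of \<open>S\<close>.\<close>
lemma polyfun_tendsto:
  assumes "f \<in> polyfun coord vars" "\<forall>v\<in>vars. ((\<lambda>t. coord (Y t) v) \<longlongrightarrow> coord Z v) F"
  shows "((\<lambda>t. f (Y t)) \<longlongrightarrow> f Z) F"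
  using assms by (induction rule: polyfun.induct) (auto intro!: tendsto_intros)

lemma limit_in_zariski_closure:
  assumes Z: "Z \<in> X" and lim: "\<forall>v\<in>vars. ((\<lambda>t. coord (Y t) v) \<longlongrightarrow> coord Z v) F"
    and F: "F \<noteq> bot" and ev: "eventually (\<lambda>t. Y t \<in> S) F"
  shows "Z \<in> zariski_closure coord vars X S"
  unfolding zariski_closure_def
proof (intro CollectI conjI ballI impI)
  show "Z \<in> X" using Z .
  fix f assume f: "f \<in> polyfun coord vars" and van: "\<forall>y\<in>S. f y = 0"
  have "eventually (\<lambda>t. f (Y t) = 0) F" using ev van by (auto elim: eventually_mono)
  then have "((\<lambda>t. f (Y t)) \<longlongrightarrow> 0) F" by (rule tendsto_eventually)
  then show "f Z = 0" using tendsto_unique[OF F polyfun_tendsto[OF f lim]] by simp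
qed

definition clear_diag_blocks :: "nat \<Rightarrow> 'a::zero mat \<Rightarrow> 'a mat" where
  "clear_diag_blocks l X = mat (dim_row X) (dim_col X) (\<lambda>(j, k). if (j < l) = (k < l) then 0 else X $$ (j, k))"

definition limit_tuple :: "nat \<Rightarrow> complex mat \<Rightarrow> complex mat list \<Rightarrow> complex mat list" where
  "limit_tuple l A Ms = map (\<lambda>F. clear_diag_blocks l (A * F * transpose_mat A)) Ms"

lemma limit_tuple_entry:
  assumes "i < length Ms" "Ms ! i \<in> carrier_mat N N" "A \<in> carrier_mat N N" "j < N" "k < N"
  shows "limit_tuple l A Ms ! i $$ (j, k) = (if (j < l) = (k < l) then 0 else (A * Ms ! i * transpose_mat A) $$ (j, k))"
  using assms by (simp add: limit_tuple_def clear_diag_blocks_def)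

lemma transpose_clear_diag_blocks:
  "transpose_mat (clear_diag_blocks l X) = clear_diag_blocks l (transpose_mat X)"
  by (intro eq_matI) (auto simp: clear_diag_blocks_def)

lemma clear_diag_blocks_uminus:
  "clear_diag_blocks l (- X) = - clear_diag_blocks l (X :: 'a::group_add mat)"
  by (intro eq_matI) (auto simp: clear_diag_blocks_def)

lemma limit_tuple_sym_alt:
  assumes M: "Ms \<in> sym_alt_tuples p q N" and A: "A \<in> carrier_mat N N"
  shows "limit_tuple l A Ms \<in> sym_alt_tuples p q N"
proof -
  have len: "length Ms = p + q" and Mc: "\<And>i. i < p + q \<Longrightarrow> Ms ! i \<in> carrier_mat N N"
    and Msym: "\<And>i. i < p \<Longrightarrow> transpose_mat (Ms ! i) = Ms ! i"
    and Mskew: "\<And>i. p \<le> i \<Longrightarrow> i < p + q \<Longrightarrow> transpose_mat (Ms ! i) = - (Ms ! i)"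
    using M unfolding sym_alt_tuples_def tuple_space_def by auto
  have nth: "limit_tuple l A Ms ! i = clear_diag_blocks l (A * Ms ! i * transpose_mat A)"
    if "i < p + q" for i using that len by (simp add: limit_tuple_def)
  have transpose: "transpose_mat (limit_tuple l A Ms ! i)
      = clear_diag_blocks l (A * transpose_mat (Ms ! i) * transpose_mat A)" if i: "i < p + q" for i
  proof -
    have "transpose_mat (A * Ms ! i * transpose_mat A) = A * transpose_mat (Ms ! i) * transpose_mat A"
      using transpose_congr[OF Mc[OF i], of "transpose_mat A" N] A by simp
    then show ?thesis by (simp only: nth[OF i] transpose_clear_diag_blocks)
  qed
  have "limit_tuple l A Ms \<in> tuple_space (p + q) N"
    using len Mc A by (auto simp: tuple_space_def limit_tuple_def clear_diag_blocks_def)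
  moreover have "transpose_mat (limit_tuple l A Ms ! i) = limit_tuple l A Ms ! i" if "i < p" for i
    using transpose[of i] nth[of i] Msym[OF that] that by simp
  moreover have "transpose_mat (limit_tuple l A Ms ! i) = - (limit_tuple l A Ms ! i)"
    if "p \<le> i" "i < p + q" for i
  proof -
    have neg: "A * (- Ms ! i) * transpose_mat A = - (A * Ms ! i * transpose_mat A)"
      using A Mc[OF that(2)] by (simp add: uminus_mult_right_mat uminus_mult_left_mat)
    have "transpose_mat (limit_tuple l A Ms ! i) = clear_diag_blocks l (A * (- Ms ! i) * transpose_mat A)"
      by (simp only: transpose[OF that(2)] Mskew[OF that])
    also have "\<dots> = - (limit_tuple l A Ms ! i)"
      by (simp only: neg nth[OF that(2)] clear_diag_blocks_uminus)
    finally show ?thesis .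
  qed
  ultimately show ?thesis unfolding sym_alt_tuples_def by blast
qed

lemma limit_tuple_shape:
  assumes Ms: "\<forall>i<length Ms. Ms ! i \<in> carrier_mat N N" and A: "A \<in> carrier_mat N N"
    and sN: "length Ms * l \<le> N"
    and form: "\<forall>i<length Ms. \<forall>j<N. \<forall>k<l.
                 (A * Ms ! i * transpose_mat A) $$ (j, k) = (if j = (i + 1) * l + k then 1 else 0)"
  shows "\<forall>i<length Ms.
           (\<forall>j k. l \<le> j \<and> j < N \<and> l \<le> k \<and> k < N \<longrightarrow> limit_tuple l A Ms ! i $$ (j, k) = 0) \<and>
           (\<forall>j k. j < N \<and> k < l \<longrightarrow>
              limit_tuple l A Ms ! i $$ (j, k) = (if j = (i + 1) * l + k then 1 else 0))"
proof (intro allI impI conjI)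
  fix i j k assume i: "i < length Ms" and jk: "l \<le> j \<and> j < N \<and> l \<le> k \<and> k < N"
  then show "limit_tuple l A Ms ! i $$ (j, k) = 0" using limit_tuple_entry[OF i _ A] Ms by auto
next
  fix i j k assume i: "i < length Ms" and jk: "j < N \<and> k < l"
  have "l \<le> N" using i sN by (cases "length Ms") auto
  then have "k < N" using jk by linarith
  then show "limit_tuple l A Ms ! i $$ (j, k) = (if j = (i + 1) * l + k then 1 else 0)"
    using limit_tuple_entry[OF i _ A] Ms form i jk by auto
qed

definition scale_factor :: "nat \<Rightarrow> nat \<Rightarrow> complex \<Rightarrow> complex" where
  "scale_factor l j t = (if j < l then 1 / t else t)"

definition degeneration_curve :: "nat \<Rightarrow> nat \<Rightarrow> complex mat \<Rightarrow> complex \<Rightarrow> complex mat" where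
  "degeneration_curve N l A t = mat_diag N (\<lambda>j. scale_factor l j t) * (A + t^3 \<cdot>\<^sub>m 1\<^sub>m N)"

lemma degeneration_curve_carrier:
  "A \<in> carrier_mat N N \<Longrightarrow> degeneration_curve N l A t \<in> carrier_mat N N"
  unfolding degeneration_curve_def
  by (metis add_carrier_mat mat_diag_dim mult_carrier_mat one_carrier_mat smult_carrier_mat)

lemma row_degeneration_curve:
  assumes A: "A \<in> carrier_mat N N" and j: "j < N"
  shows "row (degeneration_curve N l A t) j = scale_factor l j t \<cdot>\<^sub>v (row A j + t^3 \<cdot>\<^sub>v unit_vec N j)"
  unfolding degeneration_curve_def
  using A j by (subst mat_diag_mult_left[of _ N N]) (auto intro!: eq_vecI)

lemma degeneration_curve_invertible:
  fixes A :: "complex mat"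
  assumes A: "A \<in> carrier_mat N N" and t: "t \<noteq> 0" and ev: "- (t^3) \<notin> spectrum A"
  shows "invertible_mat (degeneration_curve N l A t)"
proof -
  define D where "D = mat_diag N (\<lambda>j. scale_factor l j t)"
  define Q where "Q = A + t^3 \<cdot>\<^sub>m 1\<^sub>m N"
  have D: "D \<in> carrier_mat N N" and Q: "Q \<in> carrier_mat N N" unfolding D_def Q_def using A by auto
  have "det D = prod_list (diag_mat D)"
    using D by (intro det_upper_triangular) (auto simp: upper_triangular_def D_def mat_diag_def)
  moreover have "0 \<notin> set (diag_mat D)"
    using t by (auto simp: diag_mat_def D_def mat_diag_def scale_factor_def)
  ultimately have detD: "det D \<noteq> 0" by (simp add: prod_list_zero_iff)
  have "Q = char_matrix A (- (t^3))" unfolding Q_def char_matrix_def using A by simp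
  then have detQ: "det Q \<noteq> 0" using ev eigenvalue_det[OF A] unfolding spectrum_def by simp
  have G: "degeneration_curve N l A t \<in> carrier_mat N N" using degeneration_curve_carrier[OF A] .
  have "det (degeneration_curve N l A t) \<noteq> 0"
    using det_mult[OF D Q] detD detQ unfolding degeneration_curve_def D_def Q_def by simp
  then obtain B where "B \<in> carrier_mat N N" "degeneration_curve N l A t * B = 1\<^sub>m N"
      "B * degeneration_curve N l A t = 1\<^sub>m N"
    using det_nonzero_inverse[OF G] by blast
  then show ?thesis unfolding invertible_mat_def inverts_mat_def using G by auto
qed

lemma bilinear_expand:
  fixes F :: "'a::field mat"
  assumes F: "F \<in> carrier_mat N N" and x: "x \<in> carrier_vec N" and y: "y \<in> carrier_vec N"
    and u: "u \<in> carrier_vec N" and w: "w \<in> carrier_vec N"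
  shows "(a \<cdot>\<^sub>v (x + c \<cdot>\<^sub>v u)) \<bullet> (F *\<^sub>v (b \<cdot>\<^sub>v (y + c \<cdot>\<^sub>v w)))
    = a * b * (x \<bullet> (F *\<^sub>v y) + c * (x \<bullet> (F *\<^sub>v w)) + c * (u \<bullet> (F *\<^sub>v y)) + c * c * (u \<bullet> (F *\<^sub>v w)))"
proof -
  have Fy: "F *\<^sub>v y \<in> carrier_vec N" and Fw: "F *\<^sub>v w \<in> carrier_vec N" using F y w by auto
  have "F *\<^sub>v (b \<cdot>\<^sub>v (y + c \<cdot>\<^sub>v w)) = b \<cdot>\<^sub>v (F *\<^sub>v y + c \<cdot>\<^sub>v (F *\<^sub>v w))"
    using F y w by (simp add: mult_mat_vec mult_add_distrib_mat_vec)
  moreover have "(a \<cdot>\<^sub>v (x + c \<cdot>\<^sub>v u)) \<bullet> (b \<cdot>\<^sub>v (F *\<^sub>v y + c \<cdot>\<^sub>v (F *\<^sub>v w)))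
      = a * b * ((x + c \<cdot>\<^sub>v u) \<bullet> (F *\<^sub>v y + c \<cdot>\<^sub>v (F *\<^sub>v w)))"
  proof -
    have X: "x + c \<cdot>\<^sub>v u \<in> carrier_vec N" using x u by simp
    have Y: "F *\<^sub>v y + c \<cdot>\<^sub>v (F *\<^sub>v w) \<in> carrier_vec N" using Fy Fw by simp
    show ?thesis
      using smult_scalar_prod_distrib[OF X smult_carrier_vec[THEN iffD2, OF Y], of a b]
        scalar_prod_smult_distrib[OF X Y, of b] by simp
  qed
  moreover have "(x + c \<cdot>\<^sub>v u) \<bullet> (F *\<^sub>v y + c \<cdot>\<^sub>v (F *\<^sub>v w))
      = x \<bullet> (F *\<^sub>v y) + c * (x \<bullet> (F *\<^sub>v w)) + c * (u \<bullet> (F *\<^sub>v y)) + c * c * (u \<bullet> (F *\<^sub>v w))"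
    using x u Fy Fw by (simp add: add_scalar_prod_distrib scalar_prod_add_distrib
        smult_scalar_prod_distrib scalar_prod_smult_distrib algebra_simps)
  ultimately show ?thesis by simp
qed

lemma degeneration_curve_entry:
  assumes A: "A \<in> carrier_mat N N" and F: "F \<in> carrier_mat N N" and j: "j < N" and k: "k < N"
  shows "(degeneration_curve N l A t * F * transpose_mat (degeneration_curve N l A t)) $$ (j, k)
    = scale_factor l j t * scale_factor l k t *
      (row A j \<bullet> (F *\<^sub>v row A k) + t^3 * (row A j \<bullet> (F *\<^sub>v unit_vec N k))
       + t^3 * (unit_vec N j \<bullet> (F *\<^sub>v row A k)) + t^3 * t^3 * (unit_vec N j \<bullet> (F *\<^sub>v unit_vec N k)))"
proof -
  have rows: "row A i \<in> carrier_vec N" for i using A row_carrier[of A i] by (metis carrier_matD(2))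
  have "(degeneration_curve N l A t * F * transpose_mat (degeneration_curve N l A t)) $$ (j, k)
      = row (degeneration_curve N l A t) j \<bullet> (F *\<^sub>v row (degeneration_curve N l A t) k)"
    by (rule congr_entry_rows[OF degeneration_curve_carrier[OF A] F j k])
  also have "\<dots> = (scale_factor l j t \<cdot>\<^sub>v (row A j + t^3 \<cdot>\<^sub>v unit_vec N j))
      \<bullet> (F *\<^sub>v (scale_factor l k t \<cdot>\<^sub>v (row A k + t^3 \<cdot>\<^sub>v unit_vec N k)))"
    by (simp only: row_degeneration_curve[OF A j] row_degeneration_curve[OF A k])
  also have "\<dots> = scale_factor l j t * scale_factor l k t *
      (row A j \<bullet> (F *\<^sub>v row A k) + t^3 * (row A j \<bullet> (F *\<^sub>v unit_vec N k))
       + t^3 * (unit_vec N j \<bullet> (F *\<^sub>v row A k)) + t^3 * t^3 * (unit_vec N j \<bullet> (F *\<^sub>v unit_vec N k)))"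
    by (rule bilinear_expand[OF F rows rows unit_vec_carrier unit_vec_carrier])
  finally show ?thesis .
qed

text \<open>As \<open>t \<rightarrow> 0\<close>, the entries of \<open>g\<^sub>t F g\<^sub>t\<^sup>T\<close> in the two diagonal blocks tend to \<open>0\<close> (in the upper
  block because \<open>A F A\<^sup>T\<close> vanishes there), and the others tend to those of \<open>A F A\<^sup>T\<close>.\<close>
lemma degeneration_curve_entry_limit:
  assumes A: "A \<in> carrier_mat N N" and F: "F \<in> carrier_mat N N" and j: "j < N" and k: "k < N"
    and iso: "j < l \<Longrightarrow> k < l \<Longrightarrow> (A * F * transpose_mat A) $$ (j, k) = 0"
  shows "((\<lambda>t. (degeneration_curve N l A t * F * transpose_mat (degeneration_curve N l A t)) $$ (j, k))
           \<longlongrightarrow> clear_diag_blocks l (A * F * transpose_mat A) $$ (j, k)) (at 0)"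
proof -
  define a where "a = row A j \<bullet> (F *\<^sub>v row A k)"
  define b where "b = row A j \<bullet> (F *\<^sub>v unit_vec N k) + unit_vec N j \<bullet> (F *\<^sub>v row A k)"
  define c where "c = unit_vec N j \<bullet> (F *\<^sub>v unit_vec N k)"
  have a: "(A * F * transpose_mat A) $$ (j, k) = a" unfolding a_def using congr_entry_rows[OF A F j k] .
  have entry: "(degeneration_curve N l A t * F * transpose_mat (degeneration_curve N l A t)) $$ (j, k)
      = scale_factor l j t * scale_factor l k t * (a + t^3 * b + t^3 * t^3 * c)" for t
    unfolding degeneration_curve_entry[OF A F j k] a_def b_def c_def by (simp add: algebra_simps)
  define f where "f t = (if j < l \<and> k < l then t * b + t^4 * c
    else if \<not> j < l \<and> \<not> k < l then t^2 * (a + t^3 * b + t^3 * t^3 * c)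
    else a + t^3 * b + t^3 * t^3 * c)" for t :: complex
  have ev: "eventually (\<lambda>t. f t = (degeneration_curve N l A t * F * transpose_mat (degeneration_curve N l A t)) $$ (j, k)) (at 0)"
  proof (rule eventually_mono[OF eventually_neq_at_within[of 0]])
    fix t :: complex assume t: "t \<noteq> 0"
    consider (low) "j < l" "k < l" | (high) "\<not> j < l" "\<not> k < l" | (mixed) "(j < l) \<noteq> (k < l)"
      by blast
    then show "f t = (degeneration_curve N l A t * F * transpose_mat (degeneration_curve N l A t)) $$ (j, k)"
    proof cases
      case low
      then have "a = 0" using iso a by simp
      then have P: "a + t^3 * b + t^3 * t^3 * c = t^2 * (t * b + t^4 * c)"
        by (simp add: eval_nat_numeral algebra_simps)
      have cancel: "(1/t) * (1/t) * (t^2 * z) = z" for z using t by (simp add: field_simps power2_eq_square)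
      have "f t = (1/t) * (1/t) * (t^2 * (t * b + t^4 * c))" unfolding cancel using low by (simp add: f_def)
      also have "\<dots> = scale_factor l j t * scale_factor l k t * (a + t^3 * b + t^3 * t^3 * c)"
        unfolding P scale_factor_def using low by simp
      finally show ?thesis unfolding entry .
    next
      case high
      then show ?thesis unfolding entry f_def scale_factor_def by (simp add: power2_eq_square)
    next
      case mixed
      then show ?thesis using t unfolding entry f_def scale_factor_def by auto
    qed
  qed
  have lim: "(f \<longlongrightarrow> f 0) (at 0)"
    unfolding f_def by (cases "j < l"; cases "k < l") (auto intro!: tendsto_eq_intros)
  have f0: "f 0 = clear_diag_blocks l (A * F * transpose_mat A) $$ (j, k)"
    using a A F j k by (auto simp: f_def clear_diag_blocks_def)
  show ?thesis using Lim_transform_eventually[OF lim ev] f0 by simp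
qed

text \<open>Only finitely many \<open>t\<close> make \<open>-t\<^sup>3\<close> an eigenvalue of \<open>A\<close>, so the curve is invertible near \<open>0\<close>.\<close>
lemma degeneration_curve_eventually_invertible:
  fixes A :: "complex mat"
  assumes A: "A \<in> carrier_mat N N"
  shows "eventually (\<lambda>t. invertible_mat (degeneration_curve N l A t)) (at 0)"
proof -
  define bad where "bad = {t. - (t^3) \<in> spectrum A}"
  have "bad \<subseteq> (\<Union>e\<in>spectrum A. {t. poly [:e, 0, 0, 1:] t = 0})"
    unfolding bad_def by (auto simp: algebra_simps power3_eq_cube)
  moreover have "finite {t. poly [:e, 0, 0, 1:] t = (0::complex)}" for e
    by (intro poly_roots_finite) simp
  ultimately have "finite bad" using card_finite_spectrum(1)[OF A] finite_subset by blast
  then have "eventually (\<lambda>t. \<forall>b\<in>bad. t \<noteq> b) (at 0)"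
    by (intro eventually_ball_finite) (auto intro: eventually_neq_at_within)
  moreover have "eventually (\<lambda>t. t \<noteq> (0::complex)) (at 0)" by (rule eventually_neq_at_within)
  ultimately show ?thesis
  proof eventually_elim
    case (elim t)
    then have "- (t^3) \<notin> spectrum A" unfolding bad_def by blast
    then show ?case using degeneration_curve_invertible[OF A] elim by blast
  qed
qed

lemma limit_tuple_in_orbit_closure:
  assumes Ms: "Ms \<in> tuple_space s N" and A: "A \<in> carrier_mat N N"
    and iso: "\<And>i j k. i < s \<Longrightarrow> j < l \<Longrightarrow> k < l \<Longrightarrow> j < N \<Longrightarrow> k < N \<Longrightarrow>
                (A * Ms ! i * transpose_mat A) $$ (j, k) = 0"
  shows "limit_tuple l A Ms \<in> zariski_closure tuple_coord (tuple_vars s N) (tuple_space s N) (congr_orbit N Ms)"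
proof -
  have len: "length Ms = s" and Mc: "\<And>i. i < s \<Longrightarrow> Ms ! i \<in> carrier_mat N N"
    using Ms unfolding tuple_space_def by auto
  define g where "g t = degeneration_curve N l A t" for t
  define Y where "Y t = map (\<lambda>F. g t * F * transpose_mat (g t)) Ms" for t
  have "limit_tuple l A Ms \<in> tuple_space s N"
    using len Mc A by (auto simp: tuple_space_def limit_tuple_def clear_diag_blocks_def)
  moreover have "\<forall>v\<in>tuple_vars s N. ((\<lambda>t. tuple_coord (Y t) v) \<longlongrightarrow> tuple_coord (limit_tuple l A Ms) v) (at 0)"
  proof
    fix v assume "v \<in> tuple_vars s N"
    then obtain i j k where v: "v = (i, j, k)" and i: "i < s" and j: "j < N" and k: "k < N"
      unfolding tuple_vars_def by auto
    show "((\<lambda>t. tuple_coord (Y t) v) \<longlongrightarrow> tuple_coord (limit_tuple l A Ms) v) (at 0)"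
      using degeneration_curve_entry_limit[OF A Mc[OF i] j k iso[OF i _ _ j k]] i len
      unfolding v tuple_coord_def Y_def g_def limit_tuple_def by simp
  qed
  moreover have "eventually (\<lambda>t. Y t \<in> congr_orbit N Ms) (at 0)"
    using degeneration_curve_eventually_invertible[OF A, of l]
  proof eventually_elim
    case (elim t)
    then show ?case unfolding congr_orbit_def Y_def g_def using degeneration_curve_carrier[OF A] by blast
  qed
  ultimately show ?thesis by (intro limit_in_zariski_closure) auto
qed

theorem corollary3p8:
  fixes p q l N :: nat and M :: "complex mat list" and V :: "complex vec set"
  assumes M: "M \<in> sym_alt_tuples p q N"
    and V: "csubspace N V" "cdim N V = 2 ^ (p + q) * l"
    and MV: "cdim N (image_sum N M V) = (p + q) * 2 ^ (p + q) * l"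
  shows "\<exists>M' \<in> zariski_closure tuple_coord (tuple_vars (p + q) N) (tuple_space (p + q) N)
                 (congr_orbit N M).
           M' \<in> sym_alt_tuples p q N \<and>
           (\<forall>i < p + q.
              (\<forall>j k. l \<le> j \<and> j < N \<and> l \<le> k \<and> k < N \<longrightarrow> M' ! i $$ (j, k) = 0) \<and>
              (\<forall>j k. j < N \<and> k < l \<longrightarrow>
                 M' ! i $$ (j, k) = (if j = (i + 1) * l + k then 1 else 0)))"
proof -
  define s where "s = p + q"
  have Mt: "M \<in> tuple_space s N" and len: "length M = s"
    using M unfolding sym_alt_tuples_def tuple_space_def s_def by auto
  have Mc: "\<forall>i<length M. M ! i \<in> carrier_mat N N \<and> symskew (M ! i)"
    using sym_alt_tuples_symskew[OF M] .
  obtain W where W: "W \<in> carrier_mat N l" "inj_mat (block_row M W)" "length M * l \<le> N"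
    and isoW: "\<forall>i<length M. transpose_mat W * M ! i * W = 0\<^sub>m l l"
    using isotropic_frame[OF Mc V(1)] V(2) MV len unfolding s_def by (auto simp: mult.assoc)
  obtain A where A: "A \<in> carrier_mat N N" and form: "\<forall>i<length M. \<forall>j<N. \<forall>k<l.
      (A * M ! i * transpose_mat A) $$ (j, k) = (if j = (i + 1) * l + k then 1 else 0)"
    using frame_completion[OF _ W isoW] Mc by auto
  have "limit_tuple l A M \<in> zariski_closure tuple_coord (tuple_vars s N) (tuple_space s N) (congr_orbit N M)"
    using form len by (intro limit_tuple_in_orbit_closure[OF Mt A]) auto
  moreover have "limit_tuple l A M \<in> sym_alt_tuples p q N" using limit_tuple_sym_alt[OF M A] .
  moreover have "\<forall>i<s.
      (\<forall>j k. l \<le> j \<and> j < N \<and> l \<le> k \<and> k < N \<longrightarrow> limit_tuple l A M ! i $$ (j, k) = 0) \<and>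
      (\<forall>j k. j < N \<and> k < l \<longrightarrow> limit_tuple l A M ! i $$ (j, k) = (if j = (i + 1) * l + k then 1 else 0))"
    using limit_tuple_shape[OF _ A W(3) form] Mc len by auto
  ultimately show ?thesis unfolding s_def by blast
qed

end
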